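(* Let $T$ be a ditree and let $S$ be a source set or a sink set of $T$. Then every geodetic set of $T$ contains at least one vertex of $S$.
   Context: All digraphs are finite, without loops or parallel arcs. The underlying undirected graph of a digraph is obtained by forgetting orientations and deleting parallel edges. A ditree is a digraph whose underlying undirected graph is a tree (it may contain $2$-cycles, i.e., pairs of opposite arcs $uv,vu$). For $S\subseteq V(D)$, $N^-(S)$ (resp. $N^+(S)$) is the set of vertices outside $S$ having an arc to (resp. from) some vertex of $S$. A source set is a maximal strongly connected component $S$ of $D$ with $N^-(S)\setminus S=\emptyset$; a sink set is a maximal strongly connected component $S$ with $N^+(S)\setminus S=\emptyset$. For vertices $u,v$, $I(u,v)$ is the set of vertices lying on some shortest directed path from $u$ to $v$; for $S\subseteq V(D)$, $I(S)=\bigcup_{u,v\in S}(I(u,v)\cup I(v,u))$. A geodetic set of $D$ is a set $S\subseteq V(D)$ with $I(S)=V(D)$. *)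

theory Defs
  imports Main
begin

definition digraph :: "'a set \<Rightarrow> ('a \<times> 'a) set \<Rightarrow> bool" where
  "digraph V A \<longleftrightarrow> finite V \<and> A \<subseteq> V \<times> V \<and> (\<forall>v. (v, v) \<notin> A)"

definition uadj :: "('a \<times> 'a) set \<Rightarrow> 'a \<Rightarrow> 'a \<Rightarrow> bool" where
  "uadj A u v \<longleftrightarrow> (u, v) \<in> A \<or> (v, u) \<in> A"

definition ucycle :: "('a \<times> 'a) set \<Rightarrow> 'a list \<Rightarrow> bool" where
  "ucycle A c \<longleftrightarrow> length c \<ge> 3 \<and> distinct c
     \<and> (\<forall>i. Suc i < length c \<longrightarrow> uadj A (c ! i) (c ! Suc i))
     \<and> uadj A (last c) (hd c)"

(* underlying undirected graph is a tree: nonempty, connected, acyclic *)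
definition ditree :: "'a set \<Rightarrow> ('a \<times> 'a) set \<Rightarrow> bool" where
  "ditree V A \<longleftrightarrow> digraph V A \<and> V \<noteq> {}
     \<and> (\<forall>u\<in>V. \<forall>v\<in>V. (u, v) \<in> (A \<union> A\<inverse>)\<^sup>*)
     \<and> (\<nexists>c. ucycle A c)"

definition strongly_connected_set :: "('a \<times> 'a) set \<Rightarrow> 'a set \<Rightarrow> bool" where
  "strongly_connected_set A S \<longleftrightarrow> (\<forall>u\<in>S. \<forall>v\<in>S. (u, v) \<in> A\<^sup>*)"

definition strong_component :: "'a set \<Rightarrow> ('a \<times> 'a) set \<Rightarrow> 'a set \<Rightarrow> bool" where
  "strong_component V A S \<longleftrightarrow> S \<subseteq> V \<and> S \<noteq> {} \<and> strongly_connected_set A S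
     \<and> (\<forall>S'. S \<subseteq> S' \<and> S' \<subseteq> V \<and> strongly_connected_set A S' \<longrightarrow> S' = S)"

definition in_nbhd :: "'a set \<Rightarrow> ('a \<times> 'a) set \<Rightarrow> 'a set \<Rightarrow> 'a set" where
  "in_nbhd V A S = {x \<in> V - S. \<exists>y\<in>S. (x, y) \<in> A}"

definition out_nbhd :: "'a set \<Rightarrow> ('a \<times> 'a) set \<Rightarrow> 'a set \<Rightarrow> 'a set" where
  "out_nbhd V A S = {x \<in> V - S. \<exists>y\<in>S. (y, x) \<in> A}"

definition source_set :: "'a set \<Rightarrow> ('a \<times> 'a) set \<Rightarrow> 'a set \<Rightarrow> bool" where
  "source_set V A S \<longleftrightarrow> strong_component V A S \<and> in_nbhd V A S - S = {}"

definition sink_set :: "'a set \<Rightarrow> ('a \<times> 'a) set \<Rightarrow> 'a set \<Rightarrow> bool" where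
  "sink_set V A S \<longleftrightarrow> strong_component V A S \<and> out_nbhd V A S - S = {}"

definition dipath :: "'a set \<Rightarrow> ('a \<times> 'a) set \<Rightarrow> 'a \<Rightarrow> 'a \<Rightarrow> 'a list \<Rightarrow> bool" where
  "dipath V A u v p \<longleftrightarrow> p \<noteq> [] \<and> hd p = u \<and> last p = v \<and> set p \<subseteq> V \<and> distinct p
     \<and> (\<forall>i. Suc i < length p \<longrightarrow> (p ! i, p ! Suc i) \<in> A)"

definition shortest_dipath :: "'a set \<Rightarrow> ('a \<times> 'a) set \<Rightarrow> 'a \<Rightarrow> 'a \<Rightarrow> 'a list \<Rightarrow> bool" where
  "shortest_dipath V A u v p \<longleftrightarrow> dipath V A u v p
     \<and> (\<forall>q. dipath V A u v q \<longrightarrow> length p \<le> length q)"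

definition interval :: "'a set \<Rightarrow> ('a \<times> 'a) set \<Rightarrow> 'a \<Rightarrow> 'a \<Rightarrow> 'a set" where
  "interval V A u v = {x. \<exists>p. shortest_dipath V A u v p \<and> x \<in> set p}"

definition interval_set :: "'a set \<Rightarrow> ('a \<times> 'a) set \<Rightarrow> 'a set \<Rightarrow> 'a set" where
  "interval_set V A S = (\<Union>u\<in>S. \<Union>v\<in>S. interval V A u v \<union> interval V A v u)"

definition geodetic_set :: "'a set \<Rightarrow> ('a \<times> 'a) set \<Rightarrow> 'a set \<Rightarrow> bool" where
  "geodetic_set V A S \<longleftrightarrow> S \<subseteq> V \<and> interval_set V A S = V"

end

theory Submission
  imports Defs
begin

text \<open>Every vertex of \<open>S\<close> lies on a shortest path between two vertices of the geodetic
  set. In any digraph a directed path cannot enter a source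
  set from outside, nor leave a sink set, so one end of that path lies in \<open>S\<close>.\<close>

lemma nth_step_into:
  assumes "i \<le> j" "j < length p" "\<not> P (p ! i)" "P (p ! j)"
  shows "\<exists>k. i \<le> k \<and> k < j \<and> \<not> P (p ! k) \<and> P (p ! Suc k)"
  using assms
proof (induction j)
  case 0
  then show ?case by simp
next
  case (Suc j)
  show ?case
  proof (cases "P (p ! j) \<and> i \<le> j")
    case True
    then show ?thesis using Suc by (metis Suc_lessD less_Suc_eq)
  next
    case False
    with Suc.prems have "\<not> P (p ! j) \<and> i \<le> j"
      by (metis le_SucE)
    with Suc.prems show ?thesis by blast
  qed
qed

lemma dipath_disjoint_if_in_nbhd_empty:
  assumes "in_nbhd V A S = {}" "dipath V A u v p" "u \<notin> S"
  shows "set p \<inter> S = {}"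
proof (rule ccontr)
  assume "set p \<inter> S \<noteq> {}"
  then obtain j where j: "j < length p" "p ! j \<in> S"
    by (metis disjoint_iff in_set_conv_nth)
  have "p ! 0 = u"
    using assms(2) unfolding dipath_def by (metis hd_conv_nth)
  with assms(3) have "p ! 0 \<notin> S" by simp
  with j obtain k where k: "k < j" "p ! k \<notin> S" "p ! Suc k \<in> S"
    using nth_step_into[of 0 j p "\<lambda>x. x \<in> S"] by auto
  with j assms(2) have "p ! k \<in> in_nbhd V A S"
    unfolding dipath_def in_nbhd_def by (auto intro!: bexI[of _ "p ! Suc k"])
  with assms(1) show False by simp
qed

lemma dipath_disjoint_if_out_nbhd_empty:
  assumes "out_nbhd V A S = {}" "dipath V A u v p" "v \<notin> S"
  shows "set p \<inter> S = {}"
proof (rule ccontr)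
  assume "set p \<inter> S \<noteq> {}"
  then obtain i where i: "i < length p" "p ! i \<in> S"
    by (metis disjoint_iff in_set_conv_nth)
  have "p ! (length p - 1) = v"
    using assms(2) unfolding dipath_def by (metis last_conv_nth)
  with assms(3) have "p ! (length p - 1) \<notin> S" by simp
  with i obtain k where k: "k < length p - 1" "p ! k \<in> S" "p ! Suc k \<notin> S"
    using nth_step_into[of i "length p - 1" p "\<lambda>x. x \<notin> S"] by force
  with assms(2) have "p ! Suc k \<in> out_nbhd V A S"
    unfolding dipath_def out_nbhd_def by (auto intro!: bexI[of _ "p ! k"])
  with assms(1) show False by simp
qed

lemma geodetic_set_dipath_through:
  assumes "geodetic_set V A G" "x \<in> V"
  obtains u v p where "u \<in> G" "v \<in> G" "dipath V A u v p" "x \<in> set p"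
  using assms
  unfolding geodetic_set_def interval_set_def interval_def shortest_dipath_def
  by blast

theorem lemma2:
  fixes V :: "'a set" and A :: "('a \<times> 'a) set" and S G :: "'a set"
  assumes "ditree V A"
    and "source_set V A S \<or> sink_set V A S"
    and "geodetic_set V A G"
  shows "G \<inter> S \<noteq> {}"
proof
  assume GS: "G \<inter> S = {}"
  from assms(2) have "strong_component V A S"
    unfolding source_set_def sink_set_def by blast
  then obtain s where "s \<in> S" "s \<in> V"
    unfolding strong_component_def by blast
  obtain u v p where "u \<in> G" "v \<in> G" "dipath V A u v p" "s \<in> set p"
    using assms(3) \<open>s \<in> V\<close> by (rule geodetic_set_dipath_through)
  moreover have "u \<notin> S" "v \<notin> S"
    using GS \<open>u \<in> G\<close> \<open>v \<in> G\<close> by auto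
  moreover have "in_nbhd V A S = {} \<or> out_nbhd V A S = {}"
    using assms(2) unfolding source_set_def sink_set_def in_nbhd_def out_nbhd_def by blast
  ultimately have "set p \<inter> S = {}"
    by (metis dipath_disjoint_if_in_nbhd_empty dipath_disjoint_if_out_nbhd_empty)
  with \<open>s \<in> S\<close> \<open>s \<in> set p\<close> show False by blast
qed

end
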